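(* Let $b\ge2$ be an integer, $\gamma\in(0,1)$, and let $\phi$ be a $\mathbb{Z}$-periodic Lipschitz function satisfying condition (H). Then for every $x\in[0,1]$ the measure $m_x$ has no atoms.
   Context: $\Lambda=\{0,\dots,b-1\}$, $\Sigma=\Lambda^{\mathbb{Z}_+}$, $\nu$ uniform on $\Lambda$. $S(x,\mathbf{j})=\sum_{n\ge1}\gamma^{n-1}\phi\big(\frac{x+j_1+j_2b+\cdots+j_nb^{n-1}}{b^n}\big)$ for $\mathbf{j}\in\Sigma$, $x\in[0,1]$. Condition (H): for all $\mathbf{i}\neq\mathbf{j}\in\Sigma$, $x\mapsto S(x,\mathbf{j})-S(x,\mathbf{i})$ is not identically zero on $[0,1]$. $m_x$ is the image of $\nu^{\mathbb{Z}_+}$ under $\mathbf{j}\mapsto S(x,\mathbf{j})$. *)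

theory Defs
  imports "HOL-Probability.Probability"
begin

text \<open>Digit sequences: a sequence j indexed by nat, where j 0 plays the role of j_1.\<close>
definition digit_space :: "nat \<Rightarrow> (nat \<Rightarrow> nat) set" where
  "digit_space b = {j. \<forall>n. j n < b}"

text \<open>S(x,j) = sum_{n>=1} gamma^(n-1) phi((x + j_1 + j_2 b + ... + j_n b^(n-1)) / b^n)\<close>
definition S_fun :: "nat \<Rightarrow> real \<Rightarrow> (real \<Rightarrow> real) \<Rightarrow> real \<Rightarrow> (nat \<Rightarrow> nat) \<Rightarrow> real" where
  "S_fun b \<gamma> \<phi> x j =
     (\<Sum>n. \<gamma> ^ n * \<phi> ((x + (\<Sum>k<Suc n. real (j k) * real b ^ k)) / real b ^ Suc n))"

definition digit_measure :: "nat \<Rightarrow> (nat \<Rightarrow> nat) measure" where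
  "digit_measure b = PiM UNIV (\<lambda>_. measure_pmf (pmf_of_set {..<b}))"

definition m_meas :: "nat \<Rightarrow> real \<Rightarrow> (real \<Rightarrow> real) \<Rightarrow> real \<Rightarrow> real measure" where
  "m_meas b \<gamma> \<phi> x = distr (digit_measure b) borel (S_fun b \<gamma> \<phi> x)"

definition cond_H :: "nat \<Rightarrow> real \<Rightarrow> (real \<Rightarrow> real) \<Rightarrow> bool" where
  "cond_H b \<gamma> \<phi> \<longleftrightarrow> (\<forall>i\<in>digit_space b. \<forall>j\<in>digit_space b. i \<noteq> j \<longrightarrow>
      \<not> (\<forall>x\<in>{0..1}. S_fun b \<gamma> \<phi> x j - S_fun b \<gamma> \<phi> x i = 0))"

end

theory Submission
  imports Defs
begin

text \<open>
  Let \<open>atom x y\<close> be the mass of the atom of \<open>m\<^sub>x\<close> at \<open>y\<close>, and suppose the largest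
  such mass over \<open>x \<in> [0,1]\<close> is \<open>K > 0\<close>. Splitting off the first digit gives
  \<open>S(x, a j) = \<phi>(T\<^sub>a x) + \<gamma> S(T\<^sub>a x, j)\<close> with \<open>T\<^sub>a x = (x + a)/b\<close>, so \<open>atom x y\<close> is the
  average of \<open>b\<close> atom masses at the points \<open>T\<^sub>a x\<close>. Hence an atom of mass
  \<open>> K - K/b^N\<close> forces all its descendants down to depth \<open>N\<close> to be atoms, and then
  \<open>S(x, \<cdot>)\<close> takes all its values within \<open>O(\<gamma>^N)\<close> of \<open>y\<close>. Following the first \<open>n\<close> digits
  rescales this oscillation by \<open>\<gamma>^-n\<close> only, so there are points \<open>b^-n\<close>-close to any
  \<open>z \<in> [0,1]\<close> at which \<open>S\<close> hardly depends on the digits. Since \<open>S\<close> is Lipschitz in \<open>x\<close>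
  uniformly in the digits, \<open>S(z, \<cdot>)\<close> would then be constant, contradicting (H).
\<close>

lemma periodic_lipschitz_bounded:
  fixes f :: "real \<Rightarrow> real"
  assumes "periodic_fun_simple' f" and "L-lipschitz_on UNIV f"
  shows "\<bar>f t\<bar> \<le> \<bar>f 0\<bar> + L"
proof -
  interpret periodic_fun_simple' f by fact
  have "f t = f (frac t)"
    using plus_of_int[of "frac t" "\<lfloor>t\<rfloor>"] by (simp add: frac_def)
  moreover have "\<bar>f (frac t) - f 0\<bar> \<le> L * \<bar>frac t\<bar>"
    using lipschitz_onD[OF assms(2), of "frac t" 0] by (simp add: dist_real_def)
  moreover have "L * \<bar>frac t\<bar> \<le> L"
    using assms(2) frac_lt_1[of t] frac_ge_0[of t] by (simp add: lipschitz_on_def mult_left_le)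
  ultimately show ?thesis by linarith
qed

lemma abs_suminf_le_geometric:
  fixes f :: "nat \<Rightarrow> real"
  assumes "\<And>n. \<bar>f n\<bar> \<le> c * q ^ n" and "0 \<le> q" and "q < 1"
  shows "summable f" and "\<bar>suminf f\<bar> \<le> c / (1 - q)"
proof -
  have geo: "summable (\<lambda>n. c * q ^ n)"
    using assms(2,3) by (intro summable_mult summable_geometric) simp
  have abs: "summable (\<lambda>n. \<bar>f n\<bar>)"
    by (rule summable_comparison_test'[OF geo]) (use assms(1) in auto)
  then show "summable f" by (rule summable_rabs_cancel)
  have "\<bar>suminf f\<bar> \<le> (\<Sum>n. \<bar>f n\<bar>)" by (rule summable_rabs[OF abs])
  also have "\<dots> \<le> (\<Sum>n. c * q ^ n)" by (rule suminf_le[OF assms(1) abs geo])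
  also have "\<dots> = c / (1 - q)" using assms(2,3) by (simp add: suminf_mult suminf_geometric)
  finally show "\<bar>suminf f\<bar> \<le> c / (1 - q)" .
qed

lemma grid_approximation:
  fixes x z :: real and m :: nat
  assumes "m > 0" and "x \<in> {0..1}" and "z \<in> {0..1}"
  obtains k where "k < m" and "\<bar>(x + real k) / m - z\<bar> \<le> 1 / m"
proof
  define k where "k = min (m - 1) (nat \<lfloor>z * m\<rfloor>)"
  show "k < m" using assms(1) by (simp add: k_def)
  have floor_nonneg: "0 \<le> \<lfloor>z * m\<rfloor>" using assms(3) by simp
  have "real k \<le> z * m"
  proof -
    have "real k \<le> real (nat \<lfloor>z * m\<rfloor>)" by (simp add: k_def)
    then show ?thesis using floor_nonneg by linarith
  qed
  moreover have "z * m \<le> real k + 1"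
  proof (cases "nat \<lfloor>z * m\<rfloor> \<le> m - 1")
    case True
    then have "real k = of_int \<lfloor>z * m\<rfloor>" using floor_nonneg by (simp add: k_def)
    then show ?thesis by linarith
  next
    case False
    then have "real k = real m - 1" using assms(1) by (simp add: k_def)
    moreover have "z * real m \<le> 1 * real m" using assms(3) by (intro mult_right_mono) auto
    ultimately show ?thesis by simp
  qed
  ultimately have "\<bar>x + real k - z * m\<bar> \<le> 1"
    using assms(2) unfolding abs_le_iff atLeastAtMost_iff by linarith
  moreover have "(x + real k) / m - z = (x + real k - z * m) / m"
    using assms(1) by (simp add: field_simps)
  ultimately show "\<bar>(x + real k) / m - z\<bar> \<le> 1 / m"
    using assms(1) by (simp add: divide_right_mono)
qed

lemma summand_gt_of_sum_gt:
  fixes c :: "'a \<Rightarrow> real" and K :: real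
  assumes "finite A" and "\<And>a. a \<in> A \<Longrightarrow> c a \<le> K"
    and "(\<Sum>a\<in>A. c a) > card A * K - \<delta>" and "a \<in> A"
  shows "c a > K - \<delta>"
proof -
  have "(\<Sum>a\<in>A. c a) = c a + (\<Sum>a'\<in>A - {a}. c a')"
    by (rule sum.remove[OF assms(1,4)])
  moreover have "(\<Sum>a'\<in>A - {a}. c a') \<le> card (A - {a}) * K"
    using sum_mono[of "A - {a}" c "\<lambda>_. K"] assms(2) by simp
  moreover have "real (card A) = card (A - {a}) + 1"
    using card.remove[OF assms(1,4)] by simp
  ultimately show ?thesis using assms(3) by (simp add: algebra_simps)
qed

lemma (in sequence_space) emeasure_eq_nn_integral_case_nat:
  assumes A: "A \<in> sets S"
  shows "emeasure S A = (\<integral>\<^sup>+s. emeasure S {\<omega>. case_nat s \<omega> \<in> A} \<partial>M)"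
proof -
  let ?cons = "\<lambda>(s, \<omega>). case_nat s \<omega>"
  have cons: "?cons \<in> measurable (M \<Otimes>\<^sub>M S) S" by measurable
  have "emeasure S A = emeasure (distr (M \<Otimes>\<^sub>M S) S ?cons) A" by (simp add: PiM_iter)
  also have "\<dots> = emeasure (M \<Otimes>\<^sub>M S) (?cons -` A \<inter> space (M \<Otimes>\<^sub>M S))"
    by (rule emeasure_distr[OF cons A])
  also have "\<dots> = (\<integral>\<^sup>+s. emeasure S (Pair s -` (?cons -` A \<inter> space (M \<Otimes>\<^sub>M S))) \<partial>M)"
    by (rule P.emeasure_pair_measure_alt) (use cons A in measurable)
  also have "\<dots> = (\<integral>\<^sup>+s. emeasure S {\<omega>. case_nat s \<omega> \<in> A} \<partial>M)"
  proof (intro nn_integral_cong arg_cong[where f="emeasure S"])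
    fix s assume "s \<in> space M"
    moreover have "\<omega> \<in> space S" if "case_nat s \<omega> \<in> A" for \<omega>
    proof -
      have "\<omega> i \<in> space M" for i
        using that sets.sets_into_space[OF A] by (force simp: space_PiM PiE_iff dest: spec[of _ "Suc i"])
      then show ?thesis by (auto simp: space_PiM PiE_def extensional_def)
    qed
    ultimately show "Pair s -` (?cons -` A \<inter> space (M \<Otimes>\<^sub>M S)) = {\<omega>. case_nat s \<omega> \<in> A}"
      by (auto simp: space_pair_measure)
  qed
  finally show ?thesis .
qed

lemma space_digit_measure: "space (digit_measure b) = UNIV"
  by (simp add: digit_measure_def space_PiM)

lemma prob_space_digit_measure: "b > 0 \<Longrightarrow> prob_space (digit_measure b)"
  unfolding digit_measure_def by (rule prob_space_PiM) (simp add: prob_space_measure_pmf)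

lemma measure_digit_measure_case_nat:
  assumes "b > 0" and A: "A \<in> sets (digit_measure b)"
  shows "measure (digit_measure b) A
           = (\<Sum>a<b. measure (digit_measure b) {\<omega>. case_nat a \<omega> \<in> A}) / b"
proof -
  interpret sequence_space "measure_pmf (pmf_of_set {..<b})" by unfold_locales
  interpret digits: prob_space "digit_measure b" using assms(1) by (rule prob_space_digit_measure)
  let ?\<mu> = "measure (digit_measure b)"
  have "ennreal (?\<mu> A) = emeasure (digit_measure b) A" by (simp add: digits.emeasure_eq_measure)
  also have "\<dots> = (\<Sum>a<b. emeasure (digit_measure b) {\<omega>. case_nat a \<omega> \<in> A}) / b"
    using emeasure_eq_nn_integral_case_nat A assms(1)
    by (simp add: digit_measure_def nn_integral_pmf_of_set lessThan_empty_iff)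
  also have "\<dots> = ennreal ((\<Sum>a<b. ?\<mu> {\<omega>. case_nat a \<omega> \<in> A}) / b)"
    using assms(1)
    by (simp add: digits.emeasure_eq_measure sum_nonneg divide_ennreal
                  ennreal_of_nat_eq_real_of_nat)
  finally show ?thesis by (simp add: sum_nonneg)
qed

locale lipschitz_digit_series =
  fixes b :: nat and \<gamma> :: real and \<phi> :: "real \<Rightarrow> real" and L :: real
  assumes base_ge_2: "b \<ge> 2" and gamma_pos: "0 < \<gamma>" and gamma_less_1: "\<gamma> < 1"
    and periodic: "periodic_fun_simple' \<phi>"
    and lipschitz: "L-lipschitz_on UNIV \<phi>"
begin

abbreviation "S \<equiv> S_fun b \<gamma> \<phi>"
abbreviation "\<nu> \<equiv> digit_measure b"

definition T :: "nat \<Rightarrow> real \<Rightarrow> real" where "T a x = (x + real a) / real b"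

definition R :: real where "R = (\<bar>\<phi> 0\<bar> + L) / (1 - \<gamma>)"

definition S_term :: "real \<Rightarrow> (nat \<Rightarrow> nat) \<Rightarrow> nat \<Rightarrow> real" where
  "S_term x j n = \<gamma> ^ n * \<phi> ((x + (\<Sum>k<Suc n. real (j k) * real b ^ k)) / real b ^ Suc n)"

lemma S_eq_suminf: "S x j = (\<Sum>n. S_term x j n)"
  by (simp add: S_fun_def S_term_def)

lemma L_nonneg: "L \<ge> 0"
  using lipschitz by (simp add: lipschitz_on_def)

lemma R_nonneg: "R \<ge> 0"
  using L_nonneg gamma_less_1 by (simp add: R_def)

lemma abs_S_term_le: "\<bar>S_term x j n\<bar> \<le> (\<bar>\<phi> 0\<bar> + L) * \<gamma> ^ n"
  using periodic_lipschitz_bounded[OF periodic lipschitz] gamma_pos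
  by (simp add: S_term_def abs_mult mult.commute mult_left_mono)

lemma summable_S_term: "summable (S_term x j)"
  using abs_suminf_le_geometric(1)[OF abs_S_term_le] gamma_pos gamma_less_1 by simp

lemma abs_S_le: "\<bar>S x j\<bar> \<le> R"
  using abs_suminf_le_geometric(2)[OF abs_S_term_le] gamma_pos gamma_less_1
  by (simp add: S_eq_suminf R_def)

lemma S_lipschitz: "\<bar>S x j - S z j\<bar> \<le> L / (1 - \<gamma>) * \<bar>x - z\<bar>"
proof -
  have "\<bar>S_term x j n - S_term z j n\<bar> \<le> (L * \<bar>x - z\<bar>) * \<gamma> ^ n" for n
  proof -
    let ?arg = "\<lambda>x. (x + (\<Sum>k<Suc n. real (j k) * real b ^ k)) / real b ^ Suc n"
    have b_pow: "real b ^ Suc n \<ge> 1" using base_ge_2 by (intro one_le_power) simp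
    have arg_close: "\<bar>?arg x - ?arg z\<bar> \<le> \<bar>x - z\<bar>"
    proof -
      have "\<bar>?arg x - ?arg z\<bar> = \<bar>x - z\<bar> / real b ^ Suc n"
        by (simp add: diff_divide_distrib[symmetric])
      also have "\<dots> \<le> \<bar>x - z\<bar>" using b_pow by (simp add: divide_le_eq mult_le_cancel_left1)
      finally show ?thesis .
    qed
    have "\<bar>\<phi> (?arg x) - \<phi> (?arg z)\<bar> \<le> L * \<bar>?arg x - ?arg z\<bar>"
      using lipschitz_onD[OF lipschitz, of "?arg x" "?arg z"] by (simp add: dist_real_def)
    also have "\<dots> \<le> L * \<bar>x - z\<bar>" using arg_close L_nonneg by (rule mult_left_mono)
    finally show ?thesis
      using gamma_pos
      by (simp add: S_term_def abs_mult right_diff_distrib[symmetric] mult.commute mult_left_mono)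
  qed
  from abs_suminf_le_geometric[OF this] gamma_pos gamma_less_1
  have "summable (\<lambda>n. S_term x j n - S_term z j n)"
    and "\<bar>\<Sum>n. S_term x j n - S_term z j n\<bar> \<le> L * \<bar>x - z\<bar> / (1 - \<gamma>)" by simp_all
  then show ?thesis
    by (simp add: S_eq_suminf suminf_diff[OF summable_S_term summable_S_term])
qed

lemma S_case_nat: "S x (case_nat a j) = \<phi> (T a x) + \<gamma> * S (T a x) j"
proof -
  have b_pos: "real b > 0" using base_ge_2 by simp
  have shift: "S_term x (case_nat a j) (Suc n) = \<gamma> * S_term (T a x) j n" for n
  proof -
    have "(\<Sum>k<Suc (Suc n). real (case_nat a j k) * real b ^ k)
            = real a + real b * (\<Sum>k<Suc n. real (j k) * real b ^ k)"
      by (subst sum.lessThan_Suc_shift) (simp add: sum_distrib_left distrib_left mult_ac)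
    then show ?thesis
      using b_pos by (simp add: S_term_def T_def field_simps)
  qed
  have "S x (case_nat a j) = S_term x (case_nat a j) 0 + (\<Sum>n. \<gamma> * S_term (T a x) j n)"
    unfolding S_eq_suminf shift[symmetric]
    using suminf_split_head[OF summable_S_term, of x "case_nat a j"] by simp
  also have "\<dots> = \<phi> (T a x) + \<gamma> * S (T a x) j"
    by (simp add: S_eq_suminf suminf_mult[OF summable_S_term]) (simp add: S_term_def T_def)
  finally show ?thesis .
qed

lemma T_in_unit: "x \<in> {0..1} \<Longrightarrow> a < b \<Longrightarrow> T a x \<in> {0..1}"
  using base_ge_2 by (auto simp: T_def field_simps)

lemma case_nat_in_digit_space: "j \<in> digit_space b \<Longrightarrow> a < b \<Longrightarrow> case_nat a j \<in> digit_space b"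
  by (auto simp: digit_space_def split: nat.split)

lemma digit_space_cases:
  assumes "j \<in> digit_space b"
  obtains a j' where "j = case_nat a j'" and "a < b" and "j' \<in> digit_space b"
proof (rule that)
  show "j = case_nat (j 0) (j \<circ> Suc)" by (simp add: fun_eq_iff split: nat.split)
  show "j 0 < b" and "j \<circ> Suc \<in> digit_space b" using assms by (simp_all add: digit_space_def)
qed

lemma prob_space_\<nu>: "prob_space \<nu>"
  using base_ge_2 by (intro prob_space_digit_measure) simp

lemma S_measurable[measurable]: "S x \<in> borel_measurable \<nu>"
proof -
  have [measurable]: "\<phi> \<in> borel_measurable borel"
    using lipschitz_on_continuous_on[OF lipschitz] by (rule borel_measurable_continuous_onI)
  have [measurable]: "(\<lambda>j. real (j k)) \<in> borel_measurable \<nu>" for k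
  proof -
    have "(\<lambda>j. j k) \<in> measurable \<nu> (measure_pmf (pmf_of_set {..<b}))"
      unfolding digit_measure_def by (rule measurable_component_singleton) simp
    then show ?thesis by (rule measurable_compose) simp
  qed
  have "(\<lambda>j. S_term x j n) \<in> borel_measurable \<nu>" for n
    unfolding S_term_def by measurable
  then show ?thesis unfolding S_eq_suminf[abs_def] by measurable
qed

definition atom :: "real \<Rightarrow> real \<Rightarrow> real" where
  "atom x y = measure \<nu> {j. S x j = y}"

lemma atom_eq_average:
  "atom x y = (\<Sum>a<b. atom (T a x) ((y - \<phi> (T a x)) / \<gamma>)) / b"
proof -
  have "{j. S x j = y} \<in> sets \<nu>"
    using measurable_sets[OF S_measurable borel_singleton[OF sets.empty_sets]]
    by (simp add: space_digit_measure vimage_def)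
  moreover have "{j. case_nat a j \<in> {j. S x j = y}} = {j. S (T a x) j = (y - \<phi> (T a x)) / \<gamma>}" for a
    using gamma_pos by (auto simp: S_case_nat field_simps)
  ultimately show ?thesis
    using measure_digit_measure_case_nat[of b] base_ge_2 by (simp add: atom_def)
qed

lemma atom_nonneg: "atom x y \<ge> 0"
  by (simp add: atom_def)

definition max_atom :: real where
  "max_atom = (SUP (x, y) \<in> {0..1} \<times> UNIV. atom x y)"

lemma bdd_above_atoms: "bdd_above ((\<lambda>(x, y). atom x y) ` ({0..1} \<times> UNIV))"
proof (rule bdd_aboveI)
  interpret prob_space \<nu> by (rule prob_space_\<nu>)
  fix t assume "t \<in> (\<lambda>(x, y). atom x y) ` ({0..1} \<times> UNIV)"
  then obtain x y where "t = atom x y" by auto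
  then show "t \<le> 1" by (simp add: atom_def)
qed

lemma atom_le_max_atom: "x \<in> {0..1} \<Longrightarrow> atom x y \<le> max_atom"
  unfolding max_atom_def using cSUP_upper[OF _ bdd_above_atoms, of "(x, y)"] by simp

lemma exists_atom_gt:
  assumes "t < max_atom"
  obtains x y where "x \<in> {0..1}" and "atom x y > t"
proof -
  have "{0..1::real} \<times> (UNIV :: real set) \<noteq> {}" by simp
  from less_cSUP_iff[OF this bdd_above_atoms, THEN iffD1] assms
  obtain p where "p \<in> {0..1} \<times> UNIV" and "t < (\<lambda>(x, y). atom x y) p"
    unfolding max_atom_def by blast
  then show ?thesis using that by (cases p) auto
qed

lemma atom_concentrated:
  assumes "x \<in> {0..1}" and "atom x y > max_atom - max_atom / b ^ N" and "j \<in> digit_space b"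
  shows "\<bar>S x j - y\<bar> \<le> 2 * R * \<gamma> ^ N"
  using assms
proof (induction N arbitrary: x y j)
  case 0
  then have "atom x y \<noteq> 0" by simp
  then have "{j. S x j = y} \<noteq> {}" unfolding atom_def by (rule contrapos_nn) simp
  then obtain j0 where "S x j0 = y" by blast
  then show ?case using abs_S_le[of x j] abs_S_le[of x j0] by simp
next
  case (Suc N)
  obtain a j' where j: "j = case_nat a j'" "a < b" "j' \<in> digit_space b"
    using digit_space_cases[OF Suc.prems(3)] .
  define c where "c a' = atom (T a' x) ((y - \<phi> (T a' x)) / \<gamma>)" for a'
  define y' where "y' = (y - \<phi> (T a x)) / \<gamma>"
  have b_pos: "real b > 0" using base_ge_2 by simp
  have "c a > max_atom - max_atom / b ^ N"
  proof (rule summand_gt_of_sum_gt[where A = "{..<b}"])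
    show "c a' \<le> max_atom" if "a' \<in> {..<b}" for a'
      using atom_le_max_atom T_in_unit[OF Suc.prems(1)] that by (simp add: c_def)
    have "(\<Sum>a<b. c a) = b * atom x y"
      using atom_eq_average[of x y] b_pos by (simp add: c_def)
    also have "\<dots> > b * (max_atom - max_atom / b ^ Suc N)"
      using Suc.prems(2) b_pos by (intro mult_strict_left_mono)
    also have "b * (max_atom - max_atom / b ^ Suc N) = card {..<b} * max_atom - max_atom / b ^ N"
      using b_pos by (simp add: right_diff_distrib)
    finally show "(\<Sum>a<b. c a) > card {..<b} * max_atom - max_atom / b ^ N" .
  qed (use j(2) in auto)
  then have "\<bar>S (T a x) j' - y'\<bar> \<le> 2 * R * \<gamma> ^ N"
    using Suc.IH T_in_unit[OF Suc.prems(1) j(2)] j(3) by (simp add: c_def y'_def)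
  moreover have "S x j - y = \<gamma> * (S (T a x) j' - y')"
  proof -
    have "\<gamma> * y' = y - \<phi> (T a x)" using gamma_pos by (simp add: y'_def)
    then show ?thesis by (simp add: j(1) S_case_nat right_diff_distrib)
  qed
  ultimately have "\<bar>S x j - y\<bar> \<le> \<gamma> * (2 * R * \<gamma> ^ N)"
    using gamma_pos by (simp add: abs_mult)
  then show ?case by (simp add: mult_ac)
qed

definition oscillation_le :: "real \<Rightarrow> real \<Rightarrow> bool" where
  "oscillation_le x e \<longleftrightarrow> (\<forall>i\<in>digit_space b. \<forall>j\<in>digit_space b. \<bar>S x i - S x j\<bar> \<le> e)"

lemma oscillation_le_mono: "oscillation_le x e \<Longrightarrow> e \<le> e' \<Longrightarrow> oscillation_le x e'"
  by (force simp: oscillation_le_def)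

lemma oscillation_le_somewhere:
  assumes "max_atom > 0"
  obtains x where "x \<in> {0..1}" and "oscillation_le x (4 * R * \<gamma> ^ N)"
proof -
  have "max_atom - max_atom / b ^ N < max_atom" using assms base_ge_2 by simp
  then obtain x y where "x \<in> {0..1}" "atom x y > max_atom - max_atom / b ^ N"
    by (rule exists_atom_gt)
  have "oscillation_le x (4 * R * \<gamma> ^ N)"
    unfolding oscillation_le_def
  proof (intro ballI)
    fix i j assume "i \<in> digit_space b" "j \<in> digit_space b"
    with atom_concentrated[OF \<open>x \<in> {0..1}\<close> \<open>atom x y > _\<close>]
    have "\<bar>S x i - y\<bar> \<le> 2 * R * \<gamma> ^ N" "\<bar>S x j - y\<bar> \<le> 2 * R * \<gamma> ^ N" by auto
    then show "\<bar>S x i - S x j\<bar> \<le> 4 * R * \<gamma> ^ N" by linarith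
  qed
  with \<open>x \<in> {0..1}\<close> show ?thesis by (rule that)
qed

lemma oscillation_le_T:
  assumes "oscillation_le x e" and "a < b"
  shows "oscillation_le (T a x) (e / \<gamma>)"
  unfolding oscillation_le_def
proof (intro ballI)
  fix i j assume "i \<in> digit_space b" "j \<in> digit_space b"
  then have "\<bar>S x (case_nat a i) - S x (case_nat a j)\<bar> \<le> e"
    using assms case_nat_in_digit_space by (simp add: oscillation_le_def)
  then have "\<gamma> * \<bar>S (T a x) i - S (T a x) j\<bar> \<le> e"
    using gamma_pos by (simp add: S_case_nat abs_mult right_diff_distrib[symmetric])
  then show "\<bar>S (T a x) i - S (T a x) j\<bar> \<le> e / \<gamma>"
    using gamma_pos by (simp add: field_simps)
qed

lemma oscillation_le_grid:
  "oscillation_le x e \<Longrightarrow> k < b ^ n \<Longrightarrow> oscillation_le ((x + real k) / b ^ n) (e / \<gamma> ^ n)"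
proof (induction n arbitrary: x e k)
  case (Suc n)
  have b_pos: "b > 0" using base_ge_2 by simp
  have "k div b < b ^ n"
    using Suc.prems(2) by (simp add: less_mult_imp_div_less mult.commute)
  with Suc.IH[OF oscillation_le_T[OF Suc.prems(1)]] b_pos
  have "oscillation_le ((T (k mod b) x + real (k div b)) / b ^ n) (e / \<gamma> / \<gamma> ^ n)" by simp
  moreover have "(T (k mod b) x + real (k div b)) / b ^ n = (x + real k) / b ^ Suc n"
  proof -
    have "real k = real (k mod b) + real b * real (k div b)"
      by (metis of_nat_add of_nat_mult mod_mult_div_eq add.commute mult.commute)
    then show ?thesis using b_pos by (simp add: T_def field_simps)
  qed
  ultimately show ?case by (simp add: field_simps)
qed simp

lemma oscillation_le_near:
  assumes "max_atom > 0" and "z \<in> {0..1}" and "\<epsilon> > 0"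
  obtains p where "\<bar>p - z\<bar> \<le> 1 / b ^ n" and "oscillation_le p \<epsilon>"
proof -
  have "\<epsilon> * \<gamma> ^ n / (4 * R + 1) > 0" using assms(3) gamma_pos R_nonneg by simp
  then obtain N where N: "\<gamma> ^ N < \<epsilon> * \<gamma> ^ n / (4 * R + 1)"
    using real_arch_pow_inv gamma_less_1 by blast
  obtain x where x: "x \<in> {0..1}" "oscillation_le x (4 * R * \<gamma> ^ N)"
    using oscillation_le_somewhere[OF assms(1)] .
  obtain k where k: "k < b ^ n" "\<bar>(x + real k) / b ^ n - z\<bar> \<le> 1 / b ^ n"
    using grid_approximation[of "b ^ n" x z] x(1) assms(2) base_ge_2 by auto
  have "4 * R * \<gamma> ^ N \<le> (4 * R + 1) * \<gamma> ^ N" using gamma_pos by simp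
  also have "\<dots> < \<epsilon> * \<gamma> ^ n" using N R_nonneg by (simp add: field_simps)
  finally have "4 * R * \<gamma> ^ N / \<gamma> ^ n \<le> \<epsilon>" using gamma_pos by (simp add: field_simps)
  with oscillation_le_grid[OF x(2) k(1)] have "oscillation_le ((x + real k) / b ^ n) \<epsilon>"
    by (rule oscillation_le_mono)
  with k(2) show ?thesis by (rule that)
qed

lemma max_atom_eq_0:
  assumes "cond_H b \<gamma> \<phi>"
  shows "max_atom = 0"
proof (rule ccontr)
  assume "max_atom \<noteq> 0"
  then have max_pos: "max_atom > 0"
    using atom_le_max_atom[of 0 0] atom_nonneg[of 0 0] by simp
  define i where "i = (\<lambda>_::nat. 0::nat)"
  define j where "j = i(0 := 1)"
  have digits: "i \<in> digit_space b" "j \<in> digit_space b" and "i \<noteq> j"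
    using base_ge_2 by (auto simp: i_def j_def digit_space_def fun_eq_iff)
  with assms obtain z where z: "z \<in> {0..1}" "S z j - S z i \<noteq> 0"
    unfolding cond_H_def by blast
  define d where "d = \<bar>S z j - S z i\<bar>"
  define C where "C = L / (1 - \<gamma>)"
  have "d > 0" using z by (simp add: d_def)
  have "C \<ge> 0" using L_nonneg gamma_less_1 by (simp add: C_def)
  obtain n where n: "4 * C / d < b ^ n"
    using real_arch_pow[of b] base_ge_2 by auto
  obtain p where p: "\<bar>p - z\<bar> \<le> 1 / b ^ n" "oscillation_le p (d / 2)"
    using oscillation_le_near[OF max_pos z(1), of "d / 2"] \<open>d > 0\<close> by auto
  have close: "\<bar>S z k - S p k\<bar> \<le> C / b ^ n" for k
  proof -
    have "\<bar>S z k - S p k\<bar> \<le> C * \<bar>z - p\<bar>" using S_lipschitz by (simp add: C_def)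
    also have "\<dots> \<le> C * (1 / b ^ n)"
      using p(1) \<open>C \<ge> 0\<close> by (intro mult_left_mono) (auto simp: abs_minus_commute)
    finally show ?thesis by simp
  qed
  have "\<bar>S p j - S p i\<bar> \<le> d / 2"
    using p(2) digits by (simp add: oscillation_le_def)
  moreover have "C / b ^ n < d / 4"
    using n \<open>d > 0\<close> base_ge_2 by (simp add: field_simps)
  moreover have "d \<le> \<bar>S z j - S p j\<bar> + \<bar>S p j - S p i\<bar> + \<bar>S z i - S p i\<bar>"
    unfolding d_def by linarith
  ultimately show False
    using close[of i] close[of j] by linarith
qed

end

theorem lemma5p3:
  fixes b :: nat and \<gamma> :: real and \<phi> :: "real \<Rightarrow> real"
  assumes "b \<ge> 2"
    and "0 < \<gamma>" and "\<gamma> < 1"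
    and "\<forall>t. \<phi> (t + 1) = \<phi> t"
    and "\<exists>L. L-lipschitz_on UNIV \<phi>"
    and "cond_H b \<gamma> \<phi>"
  shows "\<forall>x\<in>{0..1}. \<forall>y. emeasure (m_meas b \<gamma> \<phi> x) {y} = 0"
proof (intro ballI allI)
  fix x y :: real assume x: "x \<in> {0..1}"
  obtain L where L: "L-lipschitz_on UNIV \<phi>" using assms(5) by blast
  interpret lipschitz_digit_series b \<gamma> \<phi> L
    using assms(1-4) L by unfold_locales (simp_all add: periodic_fun_simple'_def)
  interpret prob_space \<nu> by (rule prob_space_\<nu>)
  have "emeasure (m_meas b \<gamma> \<phi> x) {y} = emeasure \<nu> {j. S x j = y}"
    unfolding m_meas_def by (subst emeasure_distr) (auto simp: space_digit_measure vimage_def)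
  also have "\<dots> = atom x y" by (simp add: atom_def emeasure_eq_measure)
  also have "atom x y = 0"
    using atom_nonneg atom_le_max_atom[OF x] max_atom_eq_0[OF assms(6)] by (simp add: antisym)
  finally show "emeasure (m_meas b \<gamma> \<phi> x) {y} = 0" by simp
qed

end
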